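(* Consider a Fisher market with $n$ agents, a finite set $M$ of indivisible items, budgets $b_1,\dots,b_n>0$ that are pairwise distinct, and each agent having a lexicographic preference over $2^M$. Then a competitive equilibrium exists.
   Context: A preference $\preceq_i$ on $2^M$ is lexicographic if there is a strict order $\succ^*_i$ on items such that for $S\ne T$, $S\succ_i T$ iff the $\succ^*_i$-maximal item of $S\setminus T$ is $\succ^*_i$-preferred to the $\succ^*_i$-maximal item of $T\setminus S$ (trivially true when $T\setminus S=\emptyset$). Given item prices $p$ with $p(S)=\sum_{j\in S}p_j$, a bundle $S$ is demanded by agent $i$ if $p(S)\le b_i$ and $p(T)>b_i$ for every $T$ with $S\prec_i T$. A competitive equilibrium is a pair $(\mathcal S,p)$ with $\mathcal S=(S_1,\dots,S_n)$ a partition of all of $M$ among the agents (parts may be empty) such that $S_i$ is demanded by agent $i$ at prices $p$ for every $i$. *)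

theory Defs
  imports Complex_Main
begin

text \<open>A lexicographic strict preference on subsets of the item set M, induced by a
  strict order R on items (R x y means item x is strictly preferred to item y).\<close>

definition lex_maximal :: "('b \<Rightarrow> 'b \<Rightarrow> bool) \<Rightarrow> 'b set \<Rightarrow> 'b \<Rightarrow> bool" where
  "lex_maximal R A x \<longleftrightarrow> x \<in> A \<and> (\<forall>y\<in>A. y \<noteq> x \<longrightarrow> R x y)"

definition lex_pref :: "('b \<Rightarrow> 'b \<Rightarrow> bool) \<Rightarrow> 'b set \<Rightarrow> 'b set \<Rightarrow> bool" where
  "lex_pref R S T \<longleftrightarrow> S \<noteq> T \<and>
     (T - S = {} \<or>
      (\<exists>x y. lex_maximal R (S - T) x \<and> lex_maximal R (T - S) y \<and> R x y))"

definition strict_linear_order_on_set :: "'b set \<Rightarrow> ('b \<Rightarrow> 'b \<Rightarrow> bool) \<Rightarrow> bool" where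
  "strict_linear_order_on_set M R \<longleftrightarrow>
     (\<forall>x\<in>M. \<not> R x x) \<and>
     (\<forall>x\<in>M. \<forall>y\<in>M. \<forall>z\<in>M. R x y \<longrightarrow> R y z \<longrightarrow> R x z) \<and>
     (\<forall>x\<in>M. \<forall>y\<in>M. x \<noteq> y \<longrightarrow> R x y \<or> R y x)"

definition price :: "('b \<Rightarrow> real) \<Rightarrow> 'b set \<Rightarrow> real" where
  "price p S = (\<Sum>j\<in>S. p j)"

definition demanded :: "'b set \<Rightarrow> ('b \<Rightarrow> 'b \<Rightarrow> bool) \<Rightarrow> real \<Rightarrow> ('b \<Rightarrow> real) \<Rightarrow> 'b set \<Rightarrow> bool" where
  "demanded M R b p S \<longleftrightarrow> S \<subseteq> M \<and> price p S \<le> b \<and>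
     (\<forall>T. T \<subseteq> M \<longrightarrow> lex_pref R T S \<longrightarrow> price p T > b)"

definition competitive_equilibrium ::
  "'a set \<Rightarrow> 'b set \<Rightarrow> ('a \<Rightarrow> 'b \<Rightarrow> 'b \<Rightarrow> bool) \<Rightarrow> ('a \<Rightarrow> real) \<Rightarrow> ('a \<Rightarrow> 'b set) \<Rightarrow> ('b \<Rightarrow> real) \<Rightarrow> bool" where
  "competitive_equilibrium N M R b X p \<longleftrightarrow>
     (\<Union>i\<in>N. X i) = M \<and>
     (\<forall>i\<in>N. \<forall>k\<in>N. i \<noteq> k \<longrightarrow> X i \<inter> X k = {}) \<and>
     (\<forall>i\<in>N. demanded M (R i) (b i) p (X i))"

end

theory Submission
  imports Defs
begin

text \<open>Let agent \<open>i\<close> have the largest budget (budgets are distinct, so every other agent is strictly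
  poorer) and let \<open>x\<close> be \<open>i\<close>'s favourite item. Give \<open>x\<close> to \<open>i\<close> at price \<open>b i\<close>, and take an
  equilibrium of the market without \<open>i\<close> and \<open>x\<close> with positive prices. Lexicographically, \<open>i\<close>
  prefers a bundle to \<open>{x}\<close> only if it strictly contains \<open>{x}\<close>, which costs more than \<open>b i\<close>; every
  other agent cannot afford \<open>x\<close> at all, so its demand is that of the smaller market. The
  recursion ends with a single agent, who buys all remaining items at prices summing to its
  budget, or with no items left.\<close>

lemma strict_linear_order_on_subset:
  "strict_linear_order_on_set M R \<Longrightarrow> A \<subseteq> M \<Longrightarrow> strict_linear_order_on_set A R"
  unfolding strict_linear_order_on_set_def by blast

lemma lex_maximal_exists:
  assumes "finite A" "A \<noteq> {}" "strict_linear_order_on_set A R"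
  shows "\<exists>x. lex_maximal R A x"
  using assms
proof (induction A rule: finite_ne_induct)
  case (singleton x)
  then show ?case by (auto simp: lex_maximal_def)
next
  case (insert a F)
  then have order: "strict_linear_order_on_set (insert a F) R"
    by blast
  then obtain t where t: "lex_maximal R F t"
    using insert.IH strict_linear_order_on_subset by blast
  then have "t \<in> F" "a \<noteq> t"
    using insert.hyps by (auto simp: lex_maximal_def)
  then have "R a t \<or> R t a"
    using order unfolding strict_linear_order_on_set_def by blast
  then show ?case
  proof
    assume "R a t"
    have "R a y" if "y \<in> F" for y
    proof (cases "y = t")
      case False
      then have "R t y"
        using t that by (simp add: lex_maximal_def)
      then show ?thesis
        using \<open>R a t\<close> order \<open>t \<in> F\<close> that unfolding strict_linear_order_on_set_def by blast
    qed (use \<open>R a t\<close> in simp)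
    then have "lex_maximal R (insert a F) a"
      by (simp add: lex_maximal_def)
    then show ?case ..
  next
    assume "R t a"
    then have "lex_maximal R (insert a F) t"
      using t by (auto simp: lex_maximal_def)
    then show ?case ..
  qed
qed

lemma not_lex_pref_subset: "T \<subseteq> S \<Longrightarrow> \<not> lex_pref R T S"
  by (auto simp: lex_pref_def lex_maximal_def)

lemma lex_pref_singleton_top:
  assumes "strict_linear_order_on_set M R" "lex_maximal R M x"
    and "T \<subseteq> M" "lex_pref R T {x}"
  shows "x \<in> T" "T \<noteq> {x}"
proof -
  show "T \<noteq> {x}"
    using assms(4) by (simp add: lex_pref_def)
  show "x \<in> T"
  proof (rule ccontr)
    assume "x \<notin> T"
    then obtain y where y: "y \<in> T" "R y x"
      using assms(4) by (auto simp: lex_pref_def lex_maximal_def)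
    moreover have "R x y"
      using assms(2,3) y \<open>x \<notin> T\<close> by (auto simp: lex_maximal_def)
    ultimately show False
      using assms(1-3) unfolding strict_linear_order_on_set_def lex_maximal_def by blast
  qed
qed

lemma price_cong: "(\<And>j. j \<in> S \<Longrightarrow> p j = q j) \<Longrightarrow> price p S = price q S"
  unfolding price_def by (rule sum.cong) auto

lemma demanded_cong:
  assumes "\<And>j. j \<in> M \<Longrightarrow> p j = q j"
  shows "demanded M R b p S = demanded M R b q S"
proof -
  have "price p T = price q T" if "T \<subseteq> M" for T
    using assms that by (intro price_cong) auto
  then show ?thesis
    unfolding demanded_def by auto
qed

lemma price_ge_member:
  assumes "finite T" "x \<in> T" "\<forall>j\<in>T. p j \<ge> 0"
  shows "p x \<le> price p T"
  unfolding price_def using assms by (intro member_le_sum) auto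

lemma price_gt_member:
  assumes "finite T" "x \<in> T" "T \<noteq> {x}" "\<forall>j\<in>T. p j > 0"
  shows "p x < price p T"
proof -
  obtain z where "z \<in> T - {x}"
    using assms(2,3) by blast
  then have "0 < price p (T - {x})"
    unfolding price_def using assms(1,4) by (intro sum_pos2) auto
  moreover have "price p T = p x + price p (T - {x})"
    unfolding price_def using assms(1,2) by (rule sum.remove)
  ultimately show ?thesis
    by simp
qed

lemma demanded_insert_unaffordable:
  assumes "demanded (M - {x}) R b p S"
    and "\<And>T. T \<subseteq> M \<Longrightarrow> x \<in> T \<Longrightarrow> price p T > b"
  shows "demanded M R b p S"
  unfolding demanded_def
proof (intro conjI allI impI)
  show "S \<subseteq> M" "price p S \<le> b"
    using assms(1) unfolding demanded_def by auto
  fix T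
  assume "T \<subseteq> M" "lex_pref R T S"
  show "price p T > b"
  proof (cases "x \<in> T")
    case False
    with \<open>T \<subseteq> M\<close> have "T \<subseteq> M - {x}"
      by blast
    with \<open>lex_pref R T S\<close> show ?thesis
      using assms(1) unfolding demanded_def by blast
  qed (use assms(2) \<open>T \<subseteq> M\<close> in blast)
qed

lemma demanded_top_singleton:
  assumes "finite M" "strict_linear_order_on_set M R" "lex_maximal R M x"
    and "p x = b" "\<forall>j\<in>M. p j > 0"
  shows "demanded M R b p {x}"
  unfolding demanded_def
proof (intro conjI allI impI)
  show "{x} \<subseteq> M" "price p {x} \<le> b"
    using assms(3,4) by (auto simp: lex_maximal_def price_def)
  fix T
  assume "T \<subseteq> M" "lex_pref R T {x}"
  with assms(2,3) have "x \<in> T" "T \<noteq> {x}"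
    by (rule lex_pref_singleton_top)+
  then show "price p T > b"
    using price_gt_member[of T x p] assms \<open>T \<subseteq> M\<close> finite_subset by fastforce
qed

lemma competitive_equilibrium_no_items:
  assumes "\<forall>i\<in>N. b i \<ge> 0"
  shows "competitive_equilibrium N {} R b (\<lambda>_. {}) p"
  using assms by (simp add: competitive_equilibrium_def demanded_def price_def not_lex_pref_subset)

lemma competitive_equilibrium_single_agent:
  assumes "finite M" "M \<noteq> {}" "b i > 0"
  shows "competitive_equilibrium {i} M R b (\<lambda>_. M) (\<lambda>_. b i / card M)"
proof -
  have "price (\<lambda>_. b i / card M) M = b i"
    using assms by (simp add: price_def)
  then show ?thesis
    by (simp add: competitive_equilibrium_def demanded_def not_lex_pref_subset)
qed

lemma competitive_equilibrium_insert_richest: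
  assumes eq: "competitive_equilibrium (N - {i}) (M - {x}) R b X p"
    and pos: "\<forall>j\<in>M - {x}. p j > 0"
    and "finite M" "i \<in> N" "b i > 0" "\<forall>k\<in>N - {i}. b k < b i"
    and order: "strict_linear_order_on_set M (R i)" and top: "lex_maximal (R i) M x"
  shows "competitive_equilibrium N M R b (X(i := {x})) (p(x := b i))"
proof -
  let ?p = "p(x := b i)"
  have "x \<in> M"
    using top by (simp add: lex_maximal_def)
  have pos': "\<forall>j\<in>M. ?p j > 0"
    using pos \<open>b i > 0\<close> by auto
  have X_sub: "X k \<subseteq> M - {x}" if "k \<in> N - {i}" for k
    using eq that unfolding competitive_equilibrium_def demanded_def by blast
  have "demanded M (R k) (b k) ?p (X k)" if k: "k \<in> N - {i}" for k
  proof (rule demanded_insert_unaffordable)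
    show "demanded (M - {x}) (R k) (b k) ?p (X k)"
      using eq k demanded_cong[of "M - {x}" ?p p] unfolding competitive_equilibrium_def by auto
    fix T
    assume "T \<subseteq> M" "x \<in> T"
    then have "b i \<le> price ?p T"
      using price_ge_member[of T x ?p] pos' \<open>finite M\<close> finite_subset by (fastforce intro: less_imp_le)
    moreover have "b k < b i"
      using assms(6) k by blast
    ultimately show "price ?p T > b k"
      by linarith
  qed
  moreover have "demanded M (R i) (b i) ?p {x}"
    using demanded_top_singleton[OF \<open>finite M\<close> order top, where p = ?p and b = "b i"] pos'
    by simp
  moreover have "(\<Union>k\<in>N. (X(i := {x})) k) = M"
  proof -
    have "(\<Union>k\<in>N. (X(i := {x})) k) = insert x (\<Union>k\<in>N - {i}. X k)"
      using \<open>i \<in> N\<close> by auto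
    then show ?thesis
      using eq \<open>x \<in> M\<close> unfolding competitive_equilibrium_def by auto
  qed
  moreover have "(X(i := {x})) k \<inter> (X(i := {x})) l = {}" if "k \<in> N" "l \<in> N" "k \<noteq> l" for k l
    using that eq X_sub unfolding competitive_equilibrium_def by (cases "k = i \<or> l = i") auto
  ultimately show ?thesis
    unfolding competitive_equilibrium_def by auto
qed

lemma inj_on_obtain_strict_argmax:
  fixes b :: "'a \<Rightarrow> 'c::linorder"
  assumes "finite N" "N \<noteq> {}" "inj_on b N"
  obtains i where "i \<in> N" "\<forall>k\<in>N - {i}. b k < b i"
proof -
  have "Max (b ` N) \<in> b ` N"
    using assms by simp
  then obtain i where i: "i \<in> N" "b i = Max (b ` N)"
    by force
  have "b k < b i" if "k \<in> N - {i}" for k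
  proof -
    have "b k \<le> b i"
      using i that assms(1) by simp
    moreover have "b k \<noteq> b i"
      using that i(1) assms(3) by (auto dest: inj_onD)
    ultimately show ?thesis
      by simp
  qed
  then show thesis
    using i that by blast
qed

lemma competitive_equilibrium_with_positive_prices:
  assumes "finite N" "N \<noteq> {}" "finite M" "\<forall>i\<in>N. b i > 0" "inj_on b N"
    and "\<forall>i\<in>N. strict_linear_order_on_set M (R i)"
  shows "\<exists>X p. competitive_equilibrium N M R b X p \<and> (\<forall>j\<in>M. p j > 0)"
  using assms
proof (induction "card N" arbitrary: N M rule: less_induct)
  case less
  obtain i where i: "i \<in> N" "\<forall>k\<in>N - {i}. b k < b i"
    using inj_on_obtain_strict_argmax less.prems(1,2,5) by blast
  consider "M = {}" | "M \<noteq> {}" "N = {i}" | "M \<noteq> {}" "N - {i} \<noteq> {}"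
    using i(1) by blast
  then show ?case
  proof cases
    case 1
    have "\<forall>i\<in>N. b i \<ge> 0"
      using less.prems(4) by (simp add: less_imp_le)
    then have "competitive_equilibrium N M R b (\<lambda>_. {}) (\<lambda>_. 1)"
      by (simp add: 1 competitive_equilibrium_no_items)
    then show ?thesis
      by (auto simp: 1)
  next
    case 2
    have "competitive_equilibrium N M R b (\<lambda>_. M) (\<lambda>_. b i / card M)"
      using competitive_equilibrium_single_agent[of M b i R] 2 less.prems(3,4) i(1) by simp
    moreover have "b i / card M > 0"
      using 2 less.prems(3,4) i(1) by (simp add: card_gt_0_iff)
    ultimately show ?thesis
      by blast
  next
    case 3
    obtain x where top: "lex_maximal (R i) M x"
      using lex_maximal_exists less.prems(3,6) 3(1) i(1) by blast
    have "card (N - {i}) < card N"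
      using less.prems(1) i(1) by (rule card_Diff1_less)
    moreover have "\<forall>k\<in>N - {i}. strict_linear_order_on_set (M - {x}) (R k)"
      using less.prems(6) strict_linear_order_on_subset by blast
    ultimately obtain X p where eq: "competitive_equilibrium (N - {i}) (M - {x}) R b X p"
        and pos: "\<forall>j\<in>M - {x}. p j > 0"
      using less.hyps[of "N - {i}" "M - {x}"] less.prems(1,3,4,5) 3(2) inj_on_diff by blast
    have "competitive_equilibrium N M R b (X(i := {x})) (p(x := b i))"
      using competitive_equilibrium_insert_richest[OF eq pos less.prems(3) i(1) _ i(2) _ top]
        less.prems(4,6) i(1) by blast
    moreover have "\<forall>j\<in>M. (p(x := b i)) j > 0"
      using pos less.prems(4) i(1) by auto
    ultimately show ?thesis
      by blast
  qed
qed

theorem mainTheorem10: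
  fixes N :: "'a set" and M :: "'b set"
    and R :: "'a \<Rightarrow> 'b \<Rightarrow> 'b \<Rightarrow> bool" and b :: "'a \<Rightarrow> real"
  assumes "finite N" and "N \<noteq> {}" and "finite M"
    and "\<forall>i\<in>N. b i > 0"
    and "inj_on b N"
    and "\<forall>i\<in>N. strict_linear_order_on_set M (R i)"
  shows "\<exists>X p. competitive_equilibrium N M R b X p"
  using competitive_equilibrium_with_positive_prices[OF assms] by blast

end
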